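(* Assume the setting described in the context, for $i\in\{1,\dots,H\}$ let $W_i\colon\mathbb{R}^{\mathfrak{d}}\to\mathbb{R}$ satisfy $W_i(\theta)=\big[\sum_{j=1}^d(\mathfrak{w}^\theta_{i,j})^2\big]+(\mathfrak{b}^\theta_i)^2-(\mathfrak{v}^\theta_i)^2$ for all $\theta\in\mathbb{R}^{\mathfrak{d}}$, and let $\Theta\in C([0,\infty),\mathbb{R}^{\mathfrak{d}})$ satisfy $\Theta_t=\Theta_0-\int_0^t\mathcal{G}(\Theta_s)\,\mathrm{d}s$ for all $t\in[0,\infty)$. Then $W_i(\Theta_t)=W_i(\Theta_0)$ for all $t\in[0,\infty)$, $i\in\{1,\dots,H\}$, and $\sum_{i=1}^HW_i(\Theta_t)=\sum_{i=1}^HW_i(\Theta_0)$ for all $t\in[0,\infty)$.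
   Context: Setting: $d,H,\mathfrak{d}\in\mathbb{N}$ with $\mathfrak{d}=dH+2H+1$, $\mathscr{a}\in\mathbb{R}$, $\mathscr{b}\in(\mathscr{a},\infty)$, $f\in C([\mathscr{a},\mathscr{b}]^d,\mathbb{R})$. For $\theta=(\theta_1,\dots,\theta_{\mathfrak{d}})\in\mathbb{R}^{\mathfrak{d}}$, $i\in\{1,\dots,H\}$, $j\in\{1,\dots,d\}$ put $\mathfrak{w}^\theta_{i,j}=\theta_{(i-1)d+j}$, $\mathfrak{b}^\theta_i=\theta_{Hd+i}$, $\mathfrak{v}^\theta_i=\theta_{H(d+1)+i}$, $\mathfrak{c}^\theta=\theta_{\mathfrak{d}}$. Let $\mathfrak{R}_r\in C^1(\mathbb{R},\mathbb{R})$, $r\in\mathbb{N}$, satisfy for all $x\in\mathbb{R}$ that $\lim_{r\to\infty}\big(|\mathfrak{R}_r(x)-\max\{x,0\}|+|(\mathfrak{R}_r)'(x)-\mathbb{1}_{(0,\infty)}(x)|\big)=0$ and $\sup_{r\in\mathbb{N}}\sup_{y\in[-|x|,|x|]}|(\mathfrak{R}_r)'(y)|<\infty$. Let $\mu$ be a finite measure on $\mathcal{B}([\mathscr{a},\mathscr{b}]^d)$. For $r\in\mathbb{N}$, $\theta\in\mathbb{R}^{\mathfrak{d}}$ let $\mathfrak{L}_r(\theta)=\int_{[\mathscr{a},\mathscr{b}]^d}\big(f(y)-\mathfrak{c}^\theta-\sum_{i=1}^H\mathfrak{v}^\theta_i\,\mathfrak{R}_r(\mathfrak{b}^\theta_i+\sum_{j=1}^d\mathfrak{w}^\theta_{i,j}y_j)\big)^2\,\mu(\mathrm{d}y)$.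 Let $\mathcal{G}\colon\mathbb{R}^{\mathfrak{d}}\to\mathbb{R}^{\mathfrak{d}}$ satisfy $\mathcal{G}(\theta)=\lim_{r\to\infty}(\nabla\mathfrak{L}_r)(\theta)$ for every $\theta$ for which this limit exists ($\mathcal{G}$ is locally bounded and measurable). *)

theory Defs
  imports "HOL-Analysis.Analysis"
begin

text \<open>Parameter vectors theta in R^dd are elements of real^'n, where the index
  type 'n has dd elements and iota is a fixed bijection from {1..dd} onto 'n,
  so that theta_k (k in {1..dd}) is theta $ iota k.\<close>

definition wgt :: "(nat \<Rightarrow> 'n::finite) \<Rightarrow> nat \<Rightarrow> real^'n \<Rightarrow> nat \<Rightarrow> nat \<Rightarrow> real" where
  "wgt \<iota> d \<theta> i j = \<theta> $ \<iota> ((i - 1) * d + j)"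

definition bias :: "(nat \<Rightarrow> 'n::finite) \<Rightarrow> nat \<Rightarrow> nat \<Rightarrow> real^'n \<Rightarrow> nat \<Rightarrow> real" where
  "bias \<iota> d H \<theta> i = \<theta> $ \<iota> (H * d + i)"

definition outw :: "(nat \<Rightarrow> 'n::finite) \<Rightarrow> nat \<Rightarrow> nat \<Rightarrow> real^'n \<Rightarrow> nat \<Rightarrow> real" where
  "outw \<iota> d H \<theta> i = \<theta> $ \<iota> (H * (d + 1) + i)"

definition cout :: "(nat \<Rightarrow> 'n::finite) \<Rightarrow> nat \<Rightarrow> nat \<Rightarrow> real^'n \<Rightarrow> real" where
  "cout \<iota> d H \<theta> = \<theta> $ \<iota> (d * H + 2 * H + 1)"

text \<open>The loss L_r, with R standing for R_r; inputs y in [a,b]^d are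
  functions nat => real (extensional on {1..d}).\<close>
definition ann_loss ::
  "(nat \<Rightarrow> 'n::finite) \<Rightarrow> nat \<Rightarrow> nat \<Rightarrow> ((nat \<Rightarrow> real) \<Rightarrow> real) \<Rightarrow> (real \<Rightarrow> real)
    \<Rightarrow> (nat \<Rightarrow> real) measure \<Rightarrow> real^'n \<Rightarrow> real" where
  "ann_loss \<iota> d H f R \<mu> \<theta> =
     (\<integral>y. (f y - cout \<iota> d H \<theta>
            - (\<Sum>i = 1..H. outw \<iota> d H \<theta> i * R (bias \<iota> d H \<theta> i + (\<Sum>j = 1..d. wgt \<iota> d \<theta> i j * y j))))\<^sup>2 \<partial>\<mu>)"

definition grad :: "(real^'n \<Rightarrow> real) \<Rightarrow> real^'n \<Rightarrow> real^'n" where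
  "grad L \<theta> = (\<chi> k. frechet_derivative L (at \<theta>) (axis k 1))"

definition Wfun :: "(nat \<Rightarrow> 'n::finite) \<Rightarrow> nat \<Rightarrow> nat \<Rightarrow> nat \<Rightarrow> real^'n \<Rightarrow> real" where
  "Wfun \<iota> d H i \<theta> = (\<Sum>j = 1..d. (wgt \<iota> d \<theta> i j)\<^sup>2) + (bias \<iota> d H \<theta> i)\<^sup>2 - (outw \<iota> d H \<theta> i)\<^sup>2"

end

theory Submission
  imports Defs
begin

(* Each W_i is the quadratic form whose gradient is 2 e_i, where e_i(theta) generates the
   rescalings (w_i, b_i, v_i) |-> (lambda w_i, lambda b_i, v_i / lambda) of the i-th hidden neuron.
   A ReLU network is invariant under these rescalings; infinitesimally, max z 0 = z * [z > 0].
   The gradients of the smoothed losses L_r converge by dominated convergence, and the limit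
   is orthogonal to e_i, so G is orthogonal to grad W_i everywhere. For a solution of the
   integral equation, the chain rule for squares of primitives (Fubini over a triangle) gives
   W_i(Theta_t) - W_i(Theta_0) = -2 * integral_0^t <e_i(Theta_s), G(Theta_s)> ds = 0. *)

section \<open>Differentiation under the integral sign\<close>

lemma bounded_linear_integral:
  fixes D :: "'a \<Rightarrow> 'v::real_normed_vector \<Rightarrow> real"
  assumes "finite_measure M"
    and lin: "\<And>x. x \<in> space M \<Longrightarrow> linear (D x)"
    and meas: "\<And>h. (\<lambda>x. D x h) \<in> borel_measurable M"
    and bound: "\<And>x h. x \<in> space M \<Longrightarrow> \<bar>D x h\<bar> \<le> K * norm h"
  shows "bounded_linear (\<lambda>h. \<integral>x. D x h \<partial>M)"
proof -
  interpret finite_measure M by fact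
  have int: "integrable M (\<lambda>x. D x h)" for h
    by (rule integrable_const_bound[where B="K * norm h"]) (use bound meas in auto)
  show ?thesis
  proof (rule bounded_linear_intro[where K="K * measure M (space M)"])
    fix h1 h2
    have "(\<integral>x. D x (h1 + h2) \<partial>M) = (\<integral>x. D x h1 + D x h2 \<partial>M)"
      by (rule Bochner_Integration.integral_cong) (auto simp: lin linear_add)
    then show "(\<integral>x. D x (h1 + h2) \<partial>M) = (\<integral>x. D x h1 \<partial>M) + (\<integral>x. D x h2 \<partial>M)"
      by (simp add: int)
  next
    fix c h
    have "(\<integral>x. D x (c *\<^sub>R h) \<partial>M) = (\<integral>x. c * D x h \<partial>M)"
      by (rule Bochner_Integration.integral_cong) (auto simp: lin linear_scale)
    then show "(\<integral>x. D x (c *\<^sub>R h) \<partial>M) = c *\<^sub>R (\<integral>x. D x h \<partial>M)"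
      by simp
  next
    fix h
    have "norm (\<integral>x. D x h \<partial>M) \<le> (\<integral>x. norm (D x h) \<partial>M)"
      by (rule integral_norm_bound)
    also have "\<dots> \<le> (\<integral>x. K * norm h \<partial>M)"
      by (rule integral_mono) (use int bound in auto)
    finally show "norm (\<integral>x. D x h \<partial>M) \<le> norm h * (K * measure M (space M))"
      by (simp add: mult_ac)
  qed
qed

lemma tendsto_integral_dominated_at:
  fixes s :: "'v::first_countable_topology \<Rightarrow> 'a \<Rightarrow> 'b::{banach, second_countable_topology}"
  assumes "f \<in> borel_measurable M" and "integrable M w"
    and lim: "AE x in M. ((\<lambda>\<theta>. s \<theta> x) \<longlongrightarrow> f x) (at \<theta>0)"
    and dom: "\<forall>\<^sub>F \<theta> in at \<theta>0. s \<theta> \<in> borel_measurable M \<and> (AE x in M. norm (s \<theta> x) \<le> w x)"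
  shows "((\<lambda>\<theta>. \<integral>x. s \<theta> x \<partial>M) \<longlongrightarrow> \<integral>x. f x \<partial>M) (at \<theta>0)"
  unfolding tendsto_at_iff_sequentially o_def
proof (intro allI impI)
  fix X assume "\<forall>i. X i \<in> UNIV - {\<theta>0}" and "X \<longlonglongrightarrow> \<theta>0"
  then have X: "filterlim X (at \<theta>0) sequentially"
    by (simp add: filterlim_at)
  from eventually_compose_filterlim[OF dom X] obtain N
    where N: "\<And>i. N \<le> i \<Longrightarrow> s (X i) \<in> borel_measurable M \<and> (AE x in M. norm (s (X i) x) \<le> w x)"
    by (auto simp: eventually_sequentially)
  show "(\<lambda>i. \<integral>x. s (X i) x \<partial>M) \<longlonglongrightarrow> \<integral>x. f x \<partial>M"
  proof (rule LIMSEQ_offset[of _ N], rule integral_dominated_convergence[where w=w])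
    show "AE x in M. (\<lambda>i. s (X (i + N)) x) \<longlonglongrightarrow> f x"
      using lim by eventually_elim
        (rule filterlim_compose, assumption, rule filterlim_compose[OF X filterlim_add_const_nat_at_top])
  qed (use N assms in auto)
qed

lemma linearization_error_le:
  fixes f :: "'v::{real_normed_vector, perfect_space} \<Rightarrow> real"
  assumes der: "\<And>\<theta>. \<theta> \<in> ball \<theta>0 \<delta> \<Longrightarrow> (f has_derivative f' \<theta>) (at \<theta>)"
    and bound: "\<And>\<theta> h. \<theta> \<in> ball \<theta>0 \<delta> \<Longrightarrow> \<bar>f' \<theta> h\<bar> \<le> K * norm h"
    and \<theta>: "\<theta> \<in> ball \<theta>0 \<delta>"
  shows "\<bar>f \<theta> - f \<theta>0 - f' \<theta>0 (\<theta> - \<theta>0)\<bar> \<le> 2 * K * norm (\<theta> - \<theta>0)"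
proof -
  have \<theta>0: "\<theta>0 \<in> ball \<theta>0 \<delta>" using \<theta> by (simp add: le_less_trans[OF zero_le_dist])
  have "norm (f \<theta> - f \<theta>0 - f' \<theta>0 (\<theta> - \<theta>0)) \<le> norm (\<theta> - \<theta>0) * (2 * K)"
  proof (rule differentiable_bound_linearization[where S="ball \<theta>0 \<delta>"])
    show "\<theta>0 + t *\<^sub>R (\<theta> - \<theta>0) \<in> ball \<theta>0 \<delta>" if "t \<in> {0..1}" for t
      using convex_ball[THEN convexD_alt, OF \<theta>0 \<theta>, of t] that by (simp add: algebra_simps)
    show "(f has_derivative f' \<theta>') (at \<theta>' within ball \<theta>0 \<delta>)" if "\<theta>' \<in> ball \<theta>0 \<delta>" for \<theta>'
      using der[OF that] by (rule has_derivative_at_withinI)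
    show "onorm (f' \<theta>' - f' \<theta>0) \<le> 2 * K" if "\<theta>' \<in> ball \<theta>0 \<delta>" for \<theta>'
    proof (rule onorm_le)
      fix h
      show "norm ((f' \<theta>' - f' \<theta>0) h) \<le> 2 * K * norm h"
        using bound[OF that, of h] bound[OF \<theta>0, of h] by simp
    qed
  qed (use \<theta>0 in simp)
  then show ?thesis
    by (simp add: mult.commute)
qed

lemma has_derivative_integral:
  fixes q :: "'v::{real_normed_vector, perfect_space} \<Rightarrow> 'a \<Rightarrow> real"
  assumes fin: "finite_measure M" and "0 < \<delta>"
    and der: "\<And>\<theta> x. x \<in> space M \<Longrightarrow> \<theta> \<in> ball \<theta>0 \<delta> \<Longrightarrow> ((\<lambda>\<theta>. q \<theta> x) has_derivative Dq \<theta> x) (at \<theta>)"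
    and int: "\<And>\<theta>. \<theta> \<in> ball \<theta>0 \<delta> \<Longrightarrow> integrable M (q \<theta>)"
    and meas: "\<And>h. (\<lambda>x. Dq \<theta>0 x h) \<in> borel_measurable M"
    and bound: "\<And>\<theta> x h. x \<in> space M \<Longrightarrow> \<theta> \<in> ball \<theta>0 \<delta> \<Longrightarrow> \<bar>Dq \<theta> x h\<bar> \<le> K * norm h"
  shows "((\<lambda>\<theta>. \<integral>x. q \<theta> x \<partial>M) has_derivative (\<lambda>h. \<integral>x. Dq \<theta>0 x h \<partial>M)) (at \<theta>0)"
proof -
  interpret finite_measure M by (rule fin)
  have \<theta>0: "\<theta>0 \<in> ball \<theta>0 \<delta>" using \<open>0 < \<delta>\<close> by simp
  have intD: "integrable M (\<lambda>x. Dq \<theta>0 x h)" for h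
    by (rule integrable_const_bound[where B="K * norm h"]) (use bound \<theta>0 meas in auto)
  define E where "E \<theta> x = q \<theta> x - q \<theta>0 x - Dq \<theta>0 x (\<theta> - \<theta>0)" for \<theta> x
  have E_bound: "\<bar>E \<theta> x\<bar> \<le> 2 * K * norm (\<theta> - \<theta>0)" if "x \<in> space M" "\<theta> \<in> ball \<theta>0 \<delta>" for \<theta> x
    unfolding E_def using der[OF that(1)] bound[OF that(1)] that(2) by (rule linearization_error_le)
  have E_int: "integrable M (E \<theta>)" if "\<theta> \<in> ball \<theta>0 \<delta>" for \<theta>
    unfolding E_def using int[OF that] int[OF \<theta>0] intD by simp
  show ?thesis
    unfolding has_derivative_iff_norm
  proof (intro conjI bounded_linear_integral[OF fin])
    show "linear (Dq \<theta>0 x)" if "x \<in> space M" for x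
      using der[OF that \<theta>0] by (rule has_derivative_linear)
    show "\<bar>Dq \<theta>0 x h\<bar> \<le> K * norm h" if "x \<in> space M" for x h
      using bound[OF that \<theta>0] .
    have ball: "\<forall>\<^sub>F \<theta> in at \<theta>0. \<theta> \<in> ball \<theta>0 \<delta> - {\<theta>0}"
      using eventually_at_in_open[OF open_ball \<theta>0] .
    have "((\<lambda>\<theta>. \<integral>x. E \<theta> x / norm (\<theta> - \<theta>0) \<partial>M) \<longlongrightarrow> (\<integral>x. 0 \<partial>M)) (at \<theta>0)"
    proof (rule tendsto_integral_dominated_at[where w="\<lambda>_. 2 * K"])
      show "AE x in M. ((\<lambda>\<theta>. E \<theta> x / norm (\<theta> - \<theta>0)) \<longlongrightarrow> 0) (at \<theta>0)"
      proof (rule AE_I2, rule tendsto_norm_zero_cancel)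
        fix x assume "x \<in> space M"
        from der[OF this \<theta>0] show "((\<lambda>\<theta>. norm (E \<theta> x / norm (\<theta> - \<theta>0))) \<longlongrightarrow> 0) (at \<theta>0)"
          unfolding has_derivative_iff_norm E_def by (simp add: norm_divide)
      qed
      show "\<forall>\<^sub>F \<theta> in at \<theta>0. (\<lambda>x. E \<theta> x / norm (\<theta> - \<theta>0)) \<in> borel_measurable M
          \<and> (AE x in M. norm (E \<theta> x / norm (\<theta> - \<theta>0)) \<le> 2 * K)"
        using ball
      proof eventually_elim
        case (elim \<theta>)
        then show ?case
          using E_int[of \<theta>] E_bound[of _ \<theta>] by (auto simp: norm_divide divide_le_eq mult.commute)
      qed
    qed simp_all
    then have "((\<lambda>\<theta>. \<integral>x. E \<theta> x / norm (\<theta> - \<theta>0) \<partial>M) \<longlongrightarrow> 0) (at \<theta>0)"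
      by simp
    moreover have "\<forall>\<^sub>F \<theta> in at \<theta>0. (\<integral>x. E \<theta> x / norm (\<theta> - \<theta>0) \<partial>M)
        = ((\<integral>x. q \<theta> x \<partial>M) - (\<integral>x. q \<theta>0 x \<partial>M) - (\<integral>x. Dq \<theta>0 x (\<theta> - \<theta>0) \<partial>M)) / norm (\<theta> - \<theta>0)"
      using ball by eventually_elim (use int \<theta>0 intD in \<open>simp add: E_def\<close>)
    ultimately have "((\<lambda>\<theta>. ((\<integral>x. q \<theta> x \<partial>M) - (\<integral>x. q \<theta>0 x \<partial>M) - (\<integral>x. Dq \<theta>0 x (\<theta> - \<theta>0) \<partial>M)) / norm (\<theta> - \<theta>0)) \<longlongrightarrow> 0) (at \<theta>0)"
      by (rule Lim_transform_eventually)
    from tendsto_norm_zero[OF this]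
    show "((\<lambda>\<theta>. norm ((\<integral>x. q \<theta> x \<partial>M) - (\<integral>x. q \<theta>0 x \<partial>M) - (\<integral>x. Dq \<theta>0 x (\<theta> - \<theta>0) \<partial>M)) / norm (\<theta> - \<theta>0)) \<longlongrightarrow> 0) (at \<theta>0)"
      by (simp add: norm_divide)
  qed (use meas in auto)
qed

section \<open>Squares along integral curves\<close>

lemma set_integrable_bounded_Icc:
  fixes g :: "real \<Rightarrow> 'b::{banach, second_countable_topology}"
  assumes "g \<in> borel_measurable borel" and "\<And>s. s \<in> {a..t} \<Longrightarrow> norm (g s) \<le> B"
    and "A \<in> sets borel" and "A \<subseteq> {a..t}"
  shows "set_integrable lborel A g"
proof -
  have "emeasure lborel A \<le> emeasure lborel {a..t}"
    using assms by (intro emeasure_mono) auto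
  also have "\<dots> < \<infinity>"
    by (cases "a \<le> t") auto
  finally show ?thesis
    unfolding set_integrable_def
    by (intro integrableI_bounded_set_indicator[where B=B] AE_I2) (use assms in auto)
qed

lemma set_integral_vec_nth:
  "set_integrable M A f \<Longrightarrow> (LINT x:A|M. f x) $ k = (LINT x:A|M. f x $ k)"
  unfolding set_lebesgue_integral_def set_integrable_def
  by (subst integral_bounded_linear[OF bounded_linear_vec_nth, symmetric]) simp_all

lemma integrable_triangle_product:
  fixes g :: "real \<Rightarrow> real"
  assumes g[measurable]: "g \<in> borel_measurable borel" and bound: "\<And>s. s \<in> {a..t} \<Longrightarrow> \<bar>g s\<bar> \<le> B"
  shows "integrable (lborel \<Otimes>\<^sub>M lborel) (\<lambda>(s, u). if s \<in> {a..t} \<and> u \<in> {a..t} \<and> s < u then g s * g u else 0)"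
    (is "integrable _ ?f")
proof (rule integrableI_bounded_set[where A="{a..t} \<times> {a..t}" and B="B * B"])
  have "emeasure (lborel \<Otimes>\<^sub>M lborel) ({a..t} \<times> {a..t}) = emeasure lborel {a..t} * emeasure lborel {a..t}"
    by (rule lborel.emeasure_pair_measure_Times) auto
  then show "emeasure (lborel \<Otimes>\<^sub>M lborel) ({a..t} \<times> {a..t}) < \<infinity>"
    by (cases "a \<le> t") (simp_all add: ennreal_mult_less_top)
  have "\<bar>?f (s, u)\<bar> \<le> B * B" for s u
    using bound by (auto simp: abs_mult intro!: mult_mono intro: order_trans[OF abs_ge_zero])
  then show "AE x in lborel \<Otimes>\<^sub>M lborel. x \<in> {a..t} \<times> {a..t} \<longrightarrow> norm (?f x) \<le> B * B"
    by (intro AE_I2) (auto simp del: case_prod_conv)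
  show "AE x in lborel \<Otimes>\<^sub>M lborel. x \<notin> {a..t} \<times> {a..t} \<longrightarrow> ?f x = 0"
    by (rule AE_I2) (auto split: if_splits)
qed auto

lemma Fubini_set_integral_triangle:
  fixes g :: "real \<Rightarrow> real"
  assumes g[measurable]: "g \<in> borel_measurable borel"
    and bound: "\<And>s. s \<in> {a..t} \<Longrightarrow> \<bar>g s\<bar> \<le> B"
    and P_def: "\<And>s. P s = (LINT u:{a..s}|lborel. g u)"
  shows "set_integrable lborel {a..t} (\<lambda>s. g s * (P t - P s))"
    and "(LINT s:{a..t}|lborel. g s * P s) = (LINT s:{a..t}|lborel. g s * (P t - P s))"
proof -
  define I where "I = {a..t}"
  have g_int: "set_integrable lborel A g" if "A \<in> sets borel" "A \<subseteq> I" for A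
    using g bound that unfolding I_def by (intro set_integrable_bounded_Icc) auto
  have P_open: "P s = (LINT u:{a..<s}|lborel. g u)" for s
    unfolding P_def
    by (rule set_integral_cong_set)
      (auto simp: set_borel_measurable_def intro!: eventually_mono[OF AE_lborel_singleton[of s]])
  have P_split: "P t = P s + (LINT u:{s<..t}|lborel. g u)" if "s \<in> I" for s
  proof -
    have "{a..t} = {a..s} \<union> {s<..t}" using that by (auto simp: I_def)
    then have "P t = (LINT u:{a..s} \<union> {s<..t}|lborel. g u)"
      by (simp add: P_def)
    also have "\<dots> = P s + (LINT u:{s<..t}|lborel. g u)"
      unfolding P_def by (rule set_integral_Un) (use that in \<open>auto intro!: g_int simp: I_def\<close>)
    finally show ?thesis .
  qed
  define f where "f s u = (if s \<in> I \<and> u \<in> I \<and> s < u then g s * g u else 0)" for s u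
  have f_int: "integrable (lborel \<Otimes>\<^sub>M lborel) (case_prod f)"
    using integrable_triangle_product[OF g bound] by (simp add: f_def[abs_def] I_def)
  have inner_fst: "(\<integral>s. f s u \<partial>lborel) = indicator I u * (g u * P u)" for u
  proof (cases "u \<in> I")
    case True
    then have "(\<integral>s. f s u \<partial>lborel) = (\<integral>s. (indicator {a..<u} s *\<^sub>R g s) * g u \<partial>lborel)"
      by (intro Bochner_Integration.integral_cong) (auto simp: f_def I_def indicator_def)
    then show ?thesis
      using True by (simp add: P_open set_lebesgue_integral_def)
  qed (simp add: f_def)
  have inner_snd: "(\<integral>u. f s u \<partial>lborel) = indicator I s * (g s * (P t - P s))" for s
  proof (cases "s \<in> I")
    case True
    then have "(\<integral>u. f s u \<partial>lborel) = (\<integral>u. g s * (indicator {s<..t} u *\<^sub>R g u) \<partial>lborel)"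
      by (intro Bochner_Integration.integral_cong) (auto simp: f_def I_def indicator_def)
    then show ?thesis
      using True by (simp add: P_split set_lebesgue_integral_def)
  qed (simp add: f_def)
  show "(LINT s:{a..t}|lborel. g s * P s) = (LINT s:{a..t}|lborel. g s * (P t - P s))"
    using lborel_pair.Fubini_integral[OF f_int]
    by (simp add: inner_fst inner_snd set_lebesgue_integral_def I_def)
  show "set_integrable lborel {a..t} (\<lambda>s. g s * (P t - P s))"
    using lborel_pair.integrable_fst'[OF f_int] by (simp add: inner_snd set_integrable_def I_def)
qed

lemma set_integral_power2_Icc:
  fixes g :: "real \<Rightarrow> real"
  assumes g: "g \<in> borel_measurable borel"
    and bound: "\<And>s. s \<in> {a..t} \<Longrightarrow> \<bar>g s\<bar> \<le> B"
    and P_def: "\<And>s. P s = (LINT u:{a..s}|lborel. g u)"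
  shows "set_integrable lborel {a..t} (\<lambda>s. g s * P s)"
    and "(P t)\<^sup>2 = 2 * (LINT s:{a..t}|lborel. g s * P s)"
proof -
  have "set_integrable lborel {a..t} g"
    using g bound by (intro set_integrable_bounded_Icc) auto
  then have int_g: "set_integrable lborel {a..t} (\<lambda>s. g s * P t)"
    by simp
  note swap = Fubini_set_integral_triangle[where P=P, OF g bound P_def]
  have "set_integrable lborel {a..t} (\<lambda>s. g s * P t - g s * (P t - P s))"
    using int_g swap(1) by (rule set_integral_diff)
  then show int: "set_integrable lborel {a..t} (\<lambda>s. g s * P s)"
    by (simp add: algebra_simps)
  have "(LINT s:{a..t}|lborel. g s * P s) = (LINT s:{a..t}|lborel. g s * P t - g s * P s)"
    using swap(2) by (simp add: algebra_simps)
  also have "\<dots> = (P t)\<^sup>2 - (LINT s:{a..t}|lborel. g s * P s)"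
    using int_g int by (simp add: P_def power2_eq_square)
  finally show "(P t)\<^sup>2 = 2 * (LINT s:{a..t}|lborel. g s * P s)"
    by simp
qed

lemma integral_curve_power2:
  fixes g x :: "real \<Rightarrow> real"
  assumes g: "g \<in> borel_measurable borel" and bound: "\<And>s. s \<in> {a..t} \<Longrightarrow> \<bar>g s\<bar> \<le> B"
    and x: "\<And>s. s \<in> {a..t} \<Longrightarrow> x s = x a - (LINT u:{a..s}|lborel. g u)"
  shows "set_integrable lborel {a..t} (\<lambda>s. g s * x s)"
    and "a \<le> t \<Longrightarrow> (x t)\<^sup>2 = (x a)\<^sup>2 - 2 * (LINT s:{a..t}|lborel. g s * x s)"
proof -
  define P where "P s = (LINT u:{a..s}|lborel. g u)" for s
  note square = set_integral_power2_Icc[where P=P, OF g bound P_def]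
  have g_int: "set_integrable lborel {a..t} (\<lambda>s. g s * x a)"
    using g bound by (intro set_integrable_mult_left set_integrable_bounded_Icc) auto
  have on_interval: "g s * x s = g s * x a - g s * P s" if "s \<in> {a..t}" for s
    using x[OF that] by (simp add: P_def right_diff_distrib)
  have "set_integrable lborel {a..t} (\<lambda>s. g s * x a - g s * P s)"
    using g_int square(1) by (rule set_integral_diff)
  then show int: "set_integrable lborel {a..t} (\<lambda>s. g s * x s)"
    by (rule set_integrable_cong[THEN iffD1, rotated 3]) (auto simp: on_interval)
  assume "a \<le> t"
  have "(LINT s:{a..t}|lborel. g s * x s) = (LINT s:{a..t}|lborel. g s * x a - g s * P s)"
    by (rule set_lebesgue_integral_cong) (auto simp: on_interval)
  also have "\<dots> = P t * x a - (P t)\<^sup>2 / 2"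
    using g_int square by (simp add: P_def)
  moreover have "x t = x a - P t"
    using x[of t] \<open>a \<le> t\<close> by (simp add: P_def)
  ultimately show "(x t)\<^sup>2 = (x a)\<^sup>2 - 2 * (LINT s:{a..t}|lborel. g s * x s)"
    by (simp add: power2_diff)
qed

lemma flow_component_power2:
  fixes G :: "real^'n \<Rightarrow> real^'n" and \<Theta> :: "real \<Rightarrow> real^'n"
  assumes G[measurable]: "G \<in> borel_measurable borel"
    and G_bounded: "bounded (G ` \<Theta> ` {0..t})"
    and cont: "continuous_on {0..t} \<Theta>"
    and flow: "\<And>s. s \<in> {0..t} \<Longrightarrow> \<Theta> s = \<Theta> 0 - (LINT u:{0..s}|lborel. G (\<Theta> u))"
    and "0 \<le> t"
  shows "set_integrable lborel {0..t} (\<lambda>s. G (\<Theta> s) $ k * \<Theta> s $ k)"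
    and "(\<Theta> t $ k)\<^sup>2 = (\<Theta> 0 $ k)\<^sup>2 - 2 * (LINT s:{0..t}|lborel. G (\<Theta> s) $ k * \<Theta> s $ k)"
proof -
  \<comment> \<open>Extending \<open>\<Theta>\<close> constantly outside \<open>[0, t]\<close> makes \<open>G \<circ> \<Theta>\<close> Borel measurable on \<open>\<real>\<close>.\<close>
  define \<Theta>' where "\<Theta>' s = \<Theta> (max 0 (min t s))" for s
  have "continuous_on UNIV \<Theta>'"
    unfolding \<Theta>'_def
    by (rule continuous_on_compose2[OF cont], intro continuous_intros) (use \<open>0 \<le> t\<close> in auto)
  then have [measurable]: "\<Theta>' \<in> borel_measurable borel"
    by (rule borel_measurable_continuous_onI)
  have \<Theta>': "\<Theta>' s = \<Theta> s" if "s \<in> {0..t}" for s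
    using that by (simp add: \<Theta>'_def)
  obtain B where "\<forall>x \<in> G ` \<Theta> ` {0..t}. norm x \<le> B"
    using G_bounded unfolding bounded_iff by blast
  then have B: "\<And>s. s \<in> {0..t} \<Longrightarrow> norm (G (\<Theta>' s)) \<le> B"
    by (simp add: \<Theta>')
  define g where "g s = G (\<Theta>' s) $ k" for s
  have "(\<lambda>x. x $ k) \<in> borel_measurable (borel :: (real^'n) measure)"
    by (intro borel_measurable_continuous_onI continuous_intros)
  then have g_meas: "g \<in> borel_measurable borel"
    unfolding g_def by measurable
  have g_bound: "\<bar>g s\<bar> \<le> B" if "s \<in> {0..t}" for s
    using B[OF that] component_le_norm_cart[of "G (\<Theta>' s)" k] by (simp add: g_def)
  have component: "\<Theta> s $ k = \<Theta> 0 $ k - (LINT u:{0..s}|lborel. g u)" if s: "s \<in> {0..t}" for s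
  proof -
    have "(LINT u:{0..s}|lborel. G (\<Theta> u)) = (LINT u:{0..s}|lborel. G (\<Theta>' u))"
      using s by (intro set_lebesgue_integral_cong) (auto simp: \<Theta>')
    also have "\<dots> $ k = (LINT u:{0..s}|lborel. g u)"
      unfolding g_def using B s
      by (intro set_integral_vec_nth set_integrable_bounded_Icc[where B=B]) auto
    finally show ?thesis
      using flow[OF s] by simp
  qed
  have curve: "set_integrable lborel {0..t} (\<lambda>s. g s * \<Theta> s $ k)"
    "(\<Theta> t $ k)\<^sup>2 = (\<Theta> 0 $ k)\<^sup>2 - 2 * (LINT s:{0..t}|lborel. g s * \<Theta> s $ k)"
    using integral_curve_power2[where a=0 and x="\<lambda>s. \<Theta> s $ k", OF g_meas] g_bound component \<open>0 \<le> t\<close>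
    by blast+
  have integrand: "G (\<Theta> s) $ k * \<Theta> s $ k = g s * \<Theta> s $ k" if "s \<in> {0..t}" for s
    using that by (simp add: g_def \<Theta>')
  show "set_integrable lborel {0..t} (\<lambda>s. G (\<Theta> s) $ k * \<Theta> s $ k)"
    using curve(1) by (rule set_integrable_cong[THEN iffD2, rotated 3]) (simp_all add: integrand)
  have "(LINT s:{0..t}|lborel. G (\<Theta> s) $ k * \<Theta> s $ k) = (LINT s:{0..t}|lborel. g s * \<Theta> s $ k)"
    by (rule set_lebesgue_integral_cong) (simp_all add: integrand)
  with curve(2)
  show "(\<Theta> t $ k)\<^sup>2 = (\<Theta> 0 $ k)\<^sup>2 - 2 * (LINT s:{0..t}|lborel. G (\<Theta> s) $ k * \<Theta> s $ k)"
    by simp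
qed

lemma flow_conserves_quadratic_form:
  fixes G :: "real^'n \<Rightarrow> real^'n" and \<Theta> :: "real \<Rightarrow> real^'n"
    and c :: "'k \<Rightarrow> real" and \<kappa> :: "'k \<Rightarrow> 'n"
  assumes G: "G \<in> borel_measurable borel"
    and G_bounded: "bounded (G ` \<Theta> ` {0..t})"
    and cont: "continuous_on {0..t} \<Theta>"
    and flow: "\<And>s. s \<in> {0..t} \<Longrightarrow> \<Theta> s = \<Theta> 0 - (LINT u:{0..s}|lborel. G (\<Theta> u))"
    and "0 \<le> t"
    and orthogonal: "\<And>\<theta>. (\<Sum>m\<in>K. c m * (G \<theta> $ \<kappa> m * \<theta> $ \<kappa> m)) = 0"
  shows "(\<Sum>m\<in>K. c m * (\<Theta> t $ \<kappa> m)\<^sup>2) = (\<Sum>m\<in>K. c m * (\<Theta> 0 $ \<kappa> m)\<^sup>2)"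
proof -
  note component = flow_component_power2[OF G G_bounded cont flow \<open>0 \<le> t\<close>]
  define F where "F m s = indicator {0..t} s * (G (\<Theta> s) $ \<kappa> m * \<Theta> s $ \<kappa> m)" for m s
  have "0 = (LINT s:{0..t}|lborel. (\<Sum>m\<in>K. c m * (G (\<Theta> s) $ \<kappa> m * \<Theta> s $ \<kappa> m)))"
    by (simp add: orthogonal)
  also have "\<dots> = (\<integral>s. (\<Sum>m\<in>K. c m * F m s) \<partial>lborel)"
    by (simp add: set_lebesgue_integral_def F_def sum_distrib_left mult_ac)
  also have "\<dots> = (\<Sum>m\<in>K. c m * (LINT s:{0..t}|lborel. G (\<Theta> s) $ \<kappa> m * \<Theta> s $ \<kappa> m))"
    using component(1) by (simp add: set_lebesgue_integral_def set_integrable_def F_def)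
  finally have integrals: "(\<Sum>m\<in>K. c m * (LINT s:{0..t}|lborel. G (\<Theta> s) $ \<kappa> m * \<Theta> s $ \<kappa> m)) = 0" ..
  have "(\<Sum>m\<in>K. c m * (\<Theta> t $ \<kappa> m)\<^sup>2)
      = (\<Sum>m\<in>K. c m * ((\<Theta> 0 $ \<kappa> m)\<^sup>2 - 2 * (LINT s:{0..t}|lborel. G (\<Theta> s) $ \<kappa> m * \<Theta> s $ \<kappa> m)))"
    by (simp only: component(2))
  also have "\<dots> = (\<Sum>m\<in>K. c m * (\<Theta> 0 $ \<kappa> m)\<^sup>2)
      - 2 * (\<Sum>m\<in>K. c m * (LINT s:{0..t}|lborel. G (\<Theta> s) $ \<kappa> m * \<Theta> s $ \<kappa> m))"
    by (simp add: right_diff_distrib sum_subtractf sum_distrib_left mult.left_commute[of _ 2])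
  finally show ?thesis
    by (simp add: integrals)
qed

section \<open>Shallow networks and the rescaling direction\<close>

definition neuron_input :: "(nat \<Rightarrow> 'n::finite) \<Rightarrow> nat \<Rightarrow> nat \<Rightarrow> real^'n \<Rightarrow> (nat \<Rightarrow> real) \<Rightarrow> nat \<Rightarrow> real" where
  "neuron_input \<iota> d H \<theta> y i = bias \<iota> d H \<theta> i + (\<Sum>j = 1..d. wgt \<iota> d \<theta> i j * y j)"

definition ann_residual :: "(nat \<Rightarrow> 'n::finite) \<Rightarrow> nat \<Rightarrow> nat \<Rightarrow> ((nat \<Rightarrow> real) \<Rightarrow> real) \<Rightarrow> (real \<Rightarrow> real)
    \<Rightarrow> real^'n \<Rightarrow> (nat \<Rightarrow> real) \<Rightarrow> real" where
  "ann_residual \<iota> d H f R \<theta> y =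
     f y - cout \<iota> d H \<theta> - (\<Sum>i = 1..H. outw \<iota> d H \<theta> i * R (neuron_input \<iota> d H \<theta> y i))"

definition ann_residual_deriv :: "(nat \<Rightarrow> 'n::finite) \<Rightarrow> nat \<Rightarrow> nat \<Rightarrow> (real \<Rightarrow> real) \<Rightarrow> (real \<Rightarrow> real)
    \<Rightarrow> real^'n \<Rightarrow> (nat \<Rightarrow> real) \<Rightarrow> real^'n \<Rightarrow> real" where
  "ann_residual_deriv \<iota> d H R R' \<theta> y h = - cout \<iota> d H h
     - (\<Sum>i = 1..H. outw \<iota> d H h i * R (neuron_input \<iota> d H \<theta> y i)
          + outw \<iota> d H \<theta> i * R' (neuron_input \<iota> d H \<theta> y i) * neuron_input \<iota> d H h y i)"

lemma ann_loss_eq: "ann_loss \<iota> d H f R \<mu> \<theta> = (\<integral>y. (ann_residual \<iota> d H f R \<theta> y)\<^sup>2 \<partial>\<mu>)"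
  by (simp add: ann_loss_def ann_residual_def neuron_input_def)

lemma has_derivative_vec_nth: "((\<lambda>x. x $ k) has_derivative (\<lambda>x. x $ k)) F"
  by (rule bounded_linear_imp_has_derivative[OF bounded_linear_vec_nth])

lemma has_derivative_ann_residual:
  assumes "\<And>x. (R has_real_derivative R' x) (at x)"
  shows "((\<lambda>\<theta>. ann_residual \<iota> d H f R \<theta> y) has_derivative ann_residual_deriv \<iota> d H R R' \<theta> y) (at \<theta>)"
proof -
  have input: "((\<lambda>\<theta>. neuron_input \<iota> d H \<theta> y i) has_derivative (\<lambda>h. neuron_input \<iota> d H h y i)) (at \<theta>)" for i
    unfolding neuron_input_def bias_def wgt_def
    by (auto intro!: derivative_eq_intros has_derivative_vec_nth)
  have activation: "((\<lambda>\<theta>. R (neuron_input \<iota> d H \<theta> y i)) has_derivative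
      (\<lambda>h. R' (neuron_input \<iota> d H \<theta> y i) * neuron_input \<iota> d H h y i)) (at \<theta>)" for i
    using has_derivative_compose[OF input assms[unfolded has_field_derivative_def]]
    by (simp add: mult.commute)
  show ?thesis
    unfolding ann_residual_def ann_residual_deriv_def outw_def cout_def
    by (rule has_derivative_eq_rhs, (rule has_derivative_diff has_derivative_const
          has_derivative_sum has_derivative_mult activation has_derivative_vec_nth)+)
      (auto simp: algebra_simps fun_eq_iff)
qed

lemma sum_abs_le: "(\<And>i. i \<in> S \<Longrightarrow> \<bar>f i\<bar> \<le> (K::real)) \<Longrightarrow> \<bar>sum f S\<bar> \<le> real (card S) * K"
  by (rule order_trans[OF sum_abs]) (use sum_bounded_above[of S "\<lambda>i. \<bar>f i\<bar>" K] in auto)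

lemma neuron_input_bound:
  fixes T Y :: real
  assumes "\<And>k. \<bar>\<theta> $ k\<bar> \<le> T" and "\<And>j. j \<in> {1..d} \<Longrightarrow> \<bar>y j\<bar> \<le> Y" and "0 \<le> Y"
  shows "\<bar>neuron_input \<iota> d H \<theta> y i\<bar> \<le> T * (1 + d * Y)"
proof -
  have "0 \<le> T" using assms(1)[of undefined] by linarith
  have "\<bar>\<Sum>j = 1..d. wgt \<iota> d \<theta> i j * y j\<bar> \<le> real (card {1..d}) * (T * Y)"
    by (intro sum_abs_le) (auto simp: abs_mult wgt_def intro!: mult_mono assms \<open>0 \<le> T\<close>)
  moreover have "\<bar>bias \<iota> d H \<theta> i\<bar> \<le> T" by (simp add: bias_def assms)
  ultimately show ?thesis unfolding neuron_input_def by (simp add: algebra_simps)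
qed

lemma ann_residual_bound:
  fixes T Y A F :: real
  assumes \<theta>: "\<And>k. \<bar>\<theta> $ k\<bar> \<le> T" and y: "\<And>j. j \<in> {1..d} \<Longrightarrow> \<bar>y j\<bar> \<le> Y" "0 \<le> Y"
    and R: "\<And>z. \<bar>z\<bar> \<le> T * (1 + d * Y) \<Longrightarrow> \<bar>R z\<bar> \<le> A" and "0 \<le> A"
    and f: "\<bar>f y\<bar> \<le> F"
  shows "\<bar>ann_residual \<iota> d H f R \<theta> y\<bar> \<le> F + T + H * (T * A)"
proof -
  have "0 \<le> T" using \<theta>[of undefined] by linarith
  have "\<bar>\<Sum>i = 1..H. outw \<iota> d H \<theta> i * R (neuron_input \<iota> d H \<theta> y i)\<bar> \<le> real (card {1..H}) * (T * A)"
    by (intro sum_abs_le) (auto simp: abs_mult outw_def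
        intro!: mult_mono \<theta> R neuron_input_bound[OF \<theta> y] \<open>0 \<le> T\<close> \<open>0 \<le> A\<close>)
  moreover have "\<bar>cout \<iota> d H \<theta>\<bar> \<le> T" by (simp add: cout_def \<theta>)
  ultimately show ?thesis
    unfolding ann_residual_def using f by simp
qed

lemma ann_residual_deriv_bound:
  fixes T Y A :: real
  assumes \<theta>: "\<And>k. \<bar>\<theta> $ k\<bar> \<le> T" and y: "\<And>j. j \<in> {1..d} \<Longrightarrow> \<bar>y j\<bar> \<le> Y" "0 \<le> Y"
    and R: "\<And>z. \<bar>z\<bar> \<le> T * (1 + d * Y) \<Longrightarrow> \<bar>R z\<bar> \<le> A \<and> \<bar>R' z\<bar> \<le> A" and "0 \<le> A"
  shows "\<bar>ann_residual_deriv \<iota> d H R R' \<theta> y h\<bar> \<le> (1 + H * (A + T * A * (1 + d * Y))) * norm h"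
proof -
  have "0 \<le> T" using \<theta>[of undefined] by linarith
  have h: "\<And>k. \<bar>h $ k\<bar> \<le> norm h" by (rule component_le_norm_cart)
  have "\<bar>outw \<iota> d H h i * R (neuron_input \<iota> d H \<theta> y i)
      + outw \<iota> d H \<theta> i * R' (neuron_input \<iota> d H \<theta> y i) * neuron_input \<iota> d H h y i\<bar>
      \<le> norm h * A + T * A * (norm h * (1 + d * Y))" for i
  proof -
    have "\<bar>outw \<iota> d H h i * R (neuron_input \<iota> d H \<theta> y i)\<bar> \<le> norm h * A"
      unfolding abs_mult outw_def by (intro mult_mono h R[THEN conjunct1] neuron_input_bound[OF \<theta> y]) auto
    moreover have "\<bar>outw \<iota> d H \<theta> i * R' (neuron_input \<iota> d H \<theta> y i) * neuron_input \<iota> d H h y i\<bar>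
        \<le> T * A * (norm h * (1 + d * Y))"
      unfolding abs_mult outw_def
      by (intro mult_mono \<theta> R[THEN conjunct2] neuron_input_bound[OF \<theta> y] neuron_input_bound[OF h y])
        (auto simp: \<open>0 \<le> T\<close> \<open>0 \<le> A\<close>)
    ultimately show ?thesis by (rule abs_triangle_ineq[THEN order_trans, OF add_mono])
  qed
  then have "\<bar>\<Sum>i = 1..H. outw \<iota> d H h i * R (neuron_input \<iota> d H \<theta> y i)
      + outw \<iota> d H \<theta> i * R' (neuron_input \<iota> d H \<theta> y i) * neuron_input \<iota> d H h y i\<bar>
      \<le> real (card {1..H}) * (norm h * A + T * A * (norm h * (1 + d * Y)))"
    by (intro sum_abs_le)
  moreover have "\<bar>cout \<iota> d H h\<bar> \<le> norm h" by (simp add: cout_def h)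
  ultimately show ?thesis
    unfolding ann_residual_deriv_def by (simp add: algebra_simps)
qed

lemma ann_residual_times_deriv_bound:
  fixes T Y A F :: real
  assumes \<theta>: "\<And>k. \<bar>\<theta> $ k\<bar> \<le> T" and y: "\<And>j. j \<in> {1..d} \<Longrightarrow> \<bar>y j\<bar> \<le> Y" "0 \<le> Y"
    and R: "\<And>z. \<bar>z\<bar> \<le> T * (1 + d * Y) \<Longrightarrow> \<bar>R z\<bar> \<le> A \<and> \<bar>R' z\<bar> \<le> A" and "0 \<le> A"
    and f: "\<bar>f y\<bar> \<le> F"
  shows "\<bar>2 * ann_residual \<iota> d H f R \<theta> y * ann_residual_deriv \<iota> d H R R' \<theta> y h\<bar>
    \<le> 2 * (F + T + H * (T * A)) * (1 + H * (A + T * A * (1 + d * Y))) * norm h"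
proof -
  have "\<bar>ann_residual \<iota> d H f R \<theta> y\<bar> \<le> F + T + H * (T * A)"
    by (rule ann_residual_bound[OF \<theta> y]) (use R assms in auto)
  moreover have "\<bar>ann_residual_deriv \<iota> d H R R' \<theta> y h\<bar> \<le> (1 + H * (A + T * A * (1 + d * Y))) * norm h"
    using ann_residual_deriv_bound[OF \<theta> y R \<open>0 \<le> A\<close>] .
  ultimately show ?thesis
    unfolding abs_mult mult.assoc by (auto intro!: mult_mono order_trans[OF abs_ge_zero])
qed

text \<open>The parameters of hidden neuron \<open>i\<close> are indexed by \<open>m \<in> {1..d + 2}\<close>: the incoming
  weights (\<open>m \<le> d\<close>), the bias (\<open>m = d + 1\<close>) and the outgoing weight (\<open>m = d + 2\<close>), the
  last one entering \<open>Wfun\<close> with a minus sign.\<close>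
definition neuron_index :: "nat \<Rightarrow> nat \<Rightarrow> nat \<Rightarrow> nat \<Rightarrow> nat" where
  "neuron_index d H i m = (if m \<le> d then (i - 1) * d + m else if m = d + 1 then H * d + i else H * (d + 1) + i)"

definition neuron_sign :: "nat \<Rightarrow> nat \<Rightarrow> real" where
  "neuron_sign d m = (if m = d + 2 then -1 else 1)"

lemma weight_index_le:
  fixes i H m d :: nat
  assumes "i \<in> {1..H}" "m \<le> d"
  shows "(i - 1) * d + m \<le> H * d"
proof -
  have "(i - 1) * d + m \<le> (i - 1) * d + d" using assms by simp
  also have "\<dots> = i * d" using assms by (cases i) auto
  also have "\<dots> \<le> H * d" using assms by simp
  finally show ?thesis .
qed

lemma neuron_index_le:
  assumes "i \<in> {1..H}" "m \<in> {1..d + 2}"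
  shows "neuron_index d H i m \<in> {1..d * H + 2 * H}"
  using assms weight_index_le[OF assms(1), where m=m and d=d]
  by (auto simp: neuron_index_def mult.commute[of d H])

lemma weight_index_inj:
  fixes p q m m' d :: nat
  assumes eq: "p * d + m = q * d + m'" and "m \<in> {1..d}" "m' \<in> {1..d}"
  shows "p = q \<and> m = m'"
proof -
  obtain n n' where n: "m = Suc n" "n < d" and n': "m' = Suc n'" "n' < d"
    using assms(2,3) by (metis Suc_le_lessD atLeastAtMost_iff not0_implies_Suc not_one_le_zero)
  then have "p * d + n = q * d + n'"
    using eq by simp
  then have "(p * d + n) div d = (q * d + n') div d" "(p * d + n) mod d = (q * d + n') mod d"
    by simp_all
  then show ?thesis
    using n n' by simp
qed

lemma neuron_index_eq_iff:
  assumes "i \<in> {1..H}" "i' \<in> {1..H}" "m \<in> {1..d + 2}" "m' \<in> {1..d + 2}"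
  shows "neuron_index d H i m = neuron_index d H i' m' \<longleftrightarrow> i = i' \<and> m = m'"
  using assms weight_index_le[OF assms(1), where m=m and d=d] weight_index_le[OF assms(2), where m=m' and d=d]
    weight_index_inj[of "i - 1" d m "i' - 1" m']
  by (auto simp: neuron_index_def split: if_splits)

lemma Wfun_eq_sum:
  "Wfun \<iota> d H i \<theta> = (\<Sum>m = 1..d + 2. neuron_sign d m * (\<theta> $ \<iota> (neuron_index d H i m))\<^sup>2)"
proof -
  have "(\<Sum>m = 1..d. neuron_sign d m * (\<theta> $ \<iota> (neuron_index d H i m))\<^sup>2) = (\<Sum>j = 1..d. (wgt \<iota> d \<theta> i j)\<^sup>2)"
    by (intro sum.cong) (auto simp: neuron_sign_def neuron_index_def wgt_def)
  then show ?thesis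
    by (simp add: Wfun_def neuron_sign_def neuron_index_def bias_def outw_def)
qed

text \<open>Half the gradient of \<open>Wfun \<iota> d H i\<close>; it generates the rescalings
  \<open>(w\<^sub>i, b\<^sub>i, v\<^sub>i) \<mapsto> (\<lambda> w\<^sub>i, \<lambda> b\<^sub>i, v\<^sub>i / \<lambda>)\<close>, which leave a ReLU network unchanged.\<close>
definition rescaling_direction :: "(nat \<Rightarrow> 'n::finite) \<Rightarrow> nat \<Rightarrow> nat \<Rightarrow> real^'n \<Rightarrow> nat \<Rightarrow> real^'n" where
  "rescaling_direction \<iota> d H \<theta> i =
     (\<Sum>m = 1..d + 2. (neuron_sign d m * \<theta> $ \<iota> (neuron_index d H i m)) *\<^sub>R axis (\<iota> (neuron_index d H i m)) 1)"

context
  fixes \<iota> :: "nat \<Rightarrow> 'n::finite" and d H :: nat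
  assumes inj: "inj_on \<iota> {1..d * H + 2 * H + 1}"
begin

lemma rescaling_direction_nth:
  assumes i: "i \<in> {1..H}" and i': "i' \<in> {1..H}" and m': "m' \<in> {1..d + 2}"
  shows "rescaling_direction \<iota> d H \<theta> i $ \<iota> (neuron_index d H i' m')
    = (if i' = i then neuron_sign d m' * \<theta> $ \<iota> (neuron_index d H i m') else 0)"
proof -
  have eq: "\<iota> (neuron_index d H i' m') = \<iota> (neuron_index d H i m) \<longleftrightarrow> m = m' \<and> i' = i"
    if "m \<in> {1..d + 2}" for m
    using inj_on_eq_iff[OF inj] neuron_index_le[OF i that] neuron_index_le[OF i' m']
      neuron_index_eq_iff[OF i i' that m'] by auto
  have "rescaling_direction \<iota> d H \<theta> i $ \<iota> (neuron_index d H i' m')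
      = (\<Sum>m \<in> {1..d + 2}. if m = m' then (if i' = i then neuron_sign d m * \<theta> $ \<iota> (neuron_index d H i m) else 0) else 0)"
    unfolding rescaling_direction_def sum_component
    by (intro sum.cong refl) (auto simp: axis_def eq)
  also have "\<dots> = (if i' = i then neuron_sign d m' * \<theta> $ \<iota> (neuron_index d H i m') else 0)"
    using m' by (simp only: sum.delta finite_atLeastAtMost if_True)
  finally show ?thesis .
qed

lemma cout_rescaling_direction:
  assumes i: "i \<in> {1..H}"
  shows "cout \<iota> d H (rescaling_direction \<iota> d H \<theta> i) = 0"
proof -
  have "\<iota> (d * H + 2 * H + 1) \<noteq> \<iota> (neuron_index d H i m)" if "m \<in> {1..d + 2}" for m
    using inj_on_eq_iff[OF inj] neuron_index_le[OF i that] by fastforce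
  then show ?thesis
    unfolding rescaling_direction_def cout_def sum_component
    by (intro sum.neutral) (simp add: axis_def)
qed

lemma ann_residual_deriv_rescaling_direction:
  fixes \<theta> :: "real^'n" and y :: "nat \<Rightarrow> real"
  assumes i: "i \<in> {1..H}"
  defines "z \<equiv> neuron_input \<iota> d H \<theta> y i"
  shows "ann_residual_deriv \<iota> d H R R' \<theta> y (rescaling_direction \<iota> d H \<theta> i)
    = outw \<iota> d H \<theta> i * (R z - R' z * z)"
proof -
  let ?e = "rescaling_direction \<iota> d H \<theta> i"
  have component: "?e $ \<iota> (neuron_index d H i' m) = (if i' = i then neuron_sign d m * \<theta> $ \<iota> (neuron_index d H i m) else 0)"
    if "i' \<in> {1..H}" "m \<in> {1..d + 2}" for i' m
    using rescaling_direction_nth[OF i that] .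
  have input: "neuron_input \<iota> d H ?e y i' = (if i' = i then z else 0)"
    and out: "outw \<iota> d H ?e i' = (if i' = i then - outw \<iota> d H \<theta> i else 0)" if "i' \<in> {1..H}" for i'
  proof -
    have "wgt \<iota> d ?e i' j = (if i' = i then wgt \<iota> d \<theta> i j else 0)" if "j \<in> {1..d}" for j
      using component[OF \<open>i' \<in> {1..H}\<close>, of j] that by (simp add: wgt_def neuron_index_def neuron_sign_def)
    then have "(\<Sum>j = 1..d. wgt \<iota> d ?e i' j * y j) = (\<Sum>j = 1..d. (if i' = i then wgt \<iota> d \<theta> i j else 0) * y j)"
      by (intro sum.cong) simp_all
    moreover have "bias \<iota> d H ?e i' = (if i' = i then bias \<iota> d H \<theta> i else 0)"
      using component[OF \<open>i' \<in> {1..H}\<close>, of "d + 1"] by (simp add: bias_def neuron_index_def neuron_sign_def)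
    ultimately show "neuron_input \<iota> d H ?e y i' = (if i' = i then z else 0)"
      by (simp add: neuron_input_def z_def)
    show "outw \<iota> d H ?e i' = (if i' = i then - outw \<iota> d H \<theta> i else 0)"
      using component[OF \<open>i' \<in> {1..H}\<close>, of "d + 2"] by (simp add: outw_def neuron_index_def neuron_sign_def)
  qed
  have "(\<Sum>i' = 1..H. outw \<iota> d H ?e i' * R (neuron_input \<iota> d H \<theta> y i')
        + outw \<iota> d H \<theta> i' * R' (neuron_input \<iota> d H \<theta> y i') * neuron_input \<iota> d H ?e y i')
      = (\<Sum>i' = 1..H. if i' = i then - outw \<iota> d H \<theta> i * R z + outw \<iota> d H \<theta> i * R' z * z else 0)"
    by (intro sum.cong) (simp_all add: input out z_def)
  then show ?thesis
    using i by (simp add: ann_residual_deriv_def cout_rescaling_direction algebra_simps)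
qed

end

section \<open>Smoothed ReLU activations\<close>

lemma compact_PiE_const:
  fixes K :: "'b::topological_space set"
  assumes "compact K"
  shows "compact (A \<rightarrow>\<^sub>E K)"
proof -
  have eq: "A \<rightarrow>\<^sub>E K = PiE UNIV (\<lambda>j. if j \<in> A then K else {undefined})"
    by (auto simp: PiE_def Pi_def extensional_def split: if_splits)
  have "compactin (product_topology (\<lambda>_. euclidean) UNIV) (PiE UNIV (\<lambda>j. if j \<in> A then K else {undefined}))"
    using assms by (subst compactin_PiE) auto
  then show ?thesis
    unfolding eq euclidean_product_topology by simp
qed

lemma max_zero_eq_indicator_mult: "max z 0 = indicator {0<..} z * (z :: real)"
  by (simp add: indicator_def)

locale smoothed_relu_regression =
  fixes d :: nat and a b :: real and f :: "(nat \<Rightarrow> real) \<Rightarrow> real"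
    and R :: "nat \<Rightarrow> real \<Rightarrow> real" and \<mu> :: "(nat \<Rightarrow> real) measure"
  assumes f_cont: "continuous_on ({1..d} \<rightarrow>\<^sub>E {a..b}) f"
    and R_C1: "\<forall>r\<ge>1. (\<forall>x. R r differentiable at x) \<and> continuous_on UNIV (deriv (R r))"
    and R_lim: "\<forall>x. (\<lambda>r. \<bar>R r x - max x 0\<bar> + \<bar>deriv (R r) x - indicator {0<..} x\<bar>) \<longlonglongrightarrow> 0"
    and R_deriv_bounded: "\<forall>x. \<exists>C. \<forall>r\<ge>1. \<forall>y\<in>{-\<bar>x\<bar>..\<bar>x\<bar>}. \<bar>deriv (R r) y\<bar> \<le> C"
    and finite_measure: "finite_measure \<mu>"
    and sets_eq: "sets \<mu> = sets (restrict_space (Pi\<^sub>M {1..d} (\<lambda>_. borel)) ({1..d} \<rightarrow>\<^sub>E {a..b}))"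
begin

lemma space_eq: "space \<mu> = {1..d} \<rightarrow>\<^sub>E {a..b}"
  using sets_eq_imp_space_eq[OF sets_eq] by (auto simp: space_restrict_space space_PiM PiE_def Pi_def)

lemma input_bound: "y \<in> space \<mu> \<Longrightarrow> j \<in> {1..d} \<Longrightarrow> \<bar>y j\<bar> \<le> \<bar>a\<bar> + \<bar>b\<bar>"
  unfolding space_eq by (auto simp: PiE_def Pi_def abs_le_iff)

lemma measurable_component [measurable]: "(\<lambda>y. y j) \<in> borel_measurable \<mu>"
proof (cases "j \<in> {1..d}")
  case True
  have "(\<lambda>y. y j) \<in> borel_measurable (restrict_space (Pi\<^sub>M {1..d} (\<lambda>_. borel)) ({1..d} \<rightarrow>\<^sub>E {a..b}))"
    by (rule measurable_restrict_space1) (rule measurable_component_singleton[OF True])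
  then show ?thesis
    by (subst measurable_cong_sets[OF sets_eq refl])
next
  case False
  then have "(\<lambda>y. y j) \<in> borel_measurable \<mu> \<longleftrightarrow> (\<lambda>y. undefined :: real) \<in> borel_measurable \<mu>"
    by (intro measurable_cong) (auto simp: space_eq PiE_def extensional_def)
  then show ?thesis by simp
qed

lemma f_measurable [measurable]: "f \<in> borel_measurable \<mu>"
proof -
  have "(\<lambda>y. y) \<in> borel_measurable \<mu>"
    by (rule measurable_coordinatewise_then_product) (rule measurable_component)
  then have "(\<lambda>y. y) \<in> measurable \<mu> (restrict_space borel ({1..d} \<rightarrow>\<^sub>E {a..b}))"
    by (rule measurable_restrict_space2[rotated]) (simp add: space_eq)
  from measurable_compose[OF this borel_measurable_continuous_on_restrict[OF f_cont]]
  show ?thesis by simp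
qed

lemma f_bounded: obtains F where "\<And>y. y \<in> space \<mu> \<Longrightarrow> \<bar>f y\<bar> \<le> F"
  using compact_imp_bounded[OF compact_continuous_image[OF f_cont compact_PiE_const]]
  unfolding bounded_iff space_eq by auto

lemma R_has_derivative: "r \<ge> 1 \<Longrightarrow> (R r has_real_derivative deriv (R r) x) (at x)"
  using R_C1 DERIV_deriv_iff_real_differentiable by blast

lemma R_measurable [measurable]: "r \<ge> 1 \<Longrightarrow> R r \<in> borel_measurable borel"
  by (rule borel_measurable_continuous_onI, rule differentiable_imp_continuous_on)
    (use R_C1 in \<open>auto simp: differentiable_on_def intro: differentiable_at_withinI\<close>)

lemma R_deriv_measurable [measurable]: "r \<ge> 1 \<Longrightarrow> deriv (R r) \<in> borel_measurable borel"
  by (rule borel_measurable_continuous_onI) (use R_C1 in auto)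

lemma R_tendsto_relu: "(\<lambda>r. R r x) \<longlonglongrightarrow> max x 0"
  and deriv_R_tendsto_step: "(\<lambda>r. deriv (R r) x) \<longlonglongrightarrow> indicator {0<..} x"
proof -
  have "(\<lambda>r. \<bar>R r x - max x 0\<bar>) \<longlonglongrightarrow> 0" "(\<lambda>r. \<bar>deriv (R r) x - indicator {0<..} x\<bar>) \<longlonglongrightarrow> 0"
    by (rule tendsto_sandwich[of "\<lambda>_. 0" _ _ "\<lambda>r. \<bar>R r x - max x 0\<bar> + \<bar>deriv (R r) x - indicator {0<..} x\<bar>"],
        auto intro: R_lim[rule_format])+
  then show "(\<lambda>r. R r x) \<longlonglongrightarrow> max x 0" "(\<lambda>r. deriv (R r) x) \<longlonglongrightarrow> indicator {0<..} x"
    by (simp_all add: tendsto_rabs_zero_iff LIM_zero_iff)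
qed

lemma R_uniformly_bounded:
  obtains A where "0 \<le> A" and "\<And>r z. r \<ge> 1 \<Longrightarrow> \<bar>z\<bar> \<le> M \<Longrightarrow> \<bar>R r z\<bar> \<le> A \<and> \<bar>deriv (R r) z\<bar> \<le> A"
proof -
  obtain C where C: "\<And>r y. r \<ge> 1 \<Longrightarrow> \<bar>y\<bar> \<le> \<bar>M\<bar> \<Longrightarrow> \<bar>deriv (R r) y\<bar> \<le> C"
    using R_deriv_bounded by (metis abs_le_iff atLeastAtMost_iff minus_le_iff)
  have "0 \<le> C"
    using C[of 1 0] by (auto intro: order_trans[OF abs_ge_zero])
  have "convergent (\<lambda>r. R r 0)"
    using R_tendsto_relu by (rule convergentI)
  then obtain B where "\<forall>r. norm (R r 0) \<le> B"
    by (auto dest!: convergent_imp_Bseq simp: Bseq_def)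
  then have B: "\<And>r. \<bar>R r 0\<bar> \<le> B"
    by simp
  \<comment> \<open>Mean value theorem on \<open>[-M, M]\<close>, anchored at the convergent values \<open>R r 0\<close>.\<close>
  have "\<bar>R r z\<bar> \<le> B + C * \<bar>M\<bar>" if "r \<ge> 1" "\<bar>z\<bar> \<le> M" for r z
  proof -
    have "norm (R r z - R r 0) \<le> C * norm (z - 0)"
    proof (rule differentiable_bound[where S="{-\<bar>M\<bar>..\<bar>M\<bar>}" and f'="\<lambda>x h. deriv (R r) x * h"])
      show "(R r has_derivative (\<lambda>h. deriv (R r) x * h)) (at x within {-\<bar>M\<bar>..\<bar>M\<bar>})" for x
        using R_has_derivative[OF that(1)] by (auto simp: has_field_derivative_def intro: has_derivative_at_withinI)
      show "onorm (\<lambda>h. deriv (R r) x * h) \<le> C" if "x \<in> {-\<bar>M\<bar>..\<bar>M\<bar>}" for x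
        using C[OF \<open>r \<ge> 1\<close>, of x] that by (intro onorm_le) (auto simp: abs_mult intro: mult_right_mono)
    qed (use that in auto)
    moreover have "C * \<bar>z\<bar> \<le> C * \<bar>M\<bar>"
      using \<open>0 \<le> C\<close> that by (intro mult_left_mono) auto
    ultimately show ?thesis
      using B[of r] by simp
  qed
  then show ?thesis
    using C B[of 1] \<open>0 \<le> C\<close> by (intro that[of "max (B + C * \<bar>M\<bar>) C"]) (auto simp: le_max_iff_disj)
qed

lemma ann_residual_measurable [measurable]:
  assumes [measurable]: "S \<in> borel_measurable borel"
  shows "(\<lambda>y. ann_residual \<iota> d H f S \<theta> y) \<in> borel_measurable \<mu>"
  unfolding ann_residual_def neuron_input_def by measurable

lemma ann_residual_deriv_measurable [measurable]:
  assumes [measurable]: "S \<in> borel_measurable borel" "S' \<in> borel_measurable borel"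
  shows "(\<lambda>y. ann_residual_deriv \<iota> d H S S' \<theta> y h) \<in> borel_measurable \<mu>"
  unfolding ann_residual_deriv_def neuron_input_def by measurable

lemma has_derivative_ann_loss:
  assumes r: "r \<ge> 1"
  shows "(ann_loss \<iota> d H f (R r) \<mu> has_derivative
    (\<lambda>h. \<integral>y. 2 * ann_residual \<iota> d H f (R r) \<theta>0 y * ann_residual_deriv \<iota> d H (R r) (deriv (R r)) \<theta>0 y h \<partial>\<mu>))
    (at \<theta>0)"
proof -
  obtain F where F: "\<And>y. y \<in> space \<mu> \<Longrightarrow> \<bar>f y\<bar> \<le> F" using f_bounded by blast
  define T where "T = norm \<theta>0 + 1"
  define Y where "Y = \<bar>a\<bar> + \<bar>b\<bar>"
  obtain A where A: "0 \<le> A" "\<And>z. \<bar>z\<bar> \<le> T * (1 + d * Y) \<Longrightarrow> \<bar>R r z\<bar> \<le> A \<and> \<bar>deriv (R r) z\<bar> \<le> A"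
    using R_uniformly_bounded r by metis
  have T: "\<bar>\<theta> $ k\<bar> \<le> T" if "\<theta> \<in> ball \<theta>0 1" for \<theta> k
    using component_le_norm_cart[of \<theta> k] norm_triangle_sub[of \<theta> \<theta>0] that
    by (simp add: T_def dist_norm norm_minus_commute)
  have Y: "\<And>y j. y \<in> space \<mu> \<Longrightarrow> j \<in> {1..d} \<Longrightarrow> \<bar>y j\<bar> \<le> Y" "0 \<le> Y"
    using input_bound by (auto simp: Y_def)
  show ?thesis
    unfolding ann_loss_eq[abs_def]
  proof (rule has_derivative_integral[OF finite_measure zero_less_one])
    show "((\<lambda>\<theta>. (ann_residual \<iota> d H f (R r) \<theta> y)\<^sup>2) has_derivative
        (\<lambda>h. 2 * ann_residual \<iota> d H f (R r) \<theta> y * ann_residual_deriv \<iota> d H (R r) (deriv (R r)) \<theta> y h)) (at \<theta>)"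
      for \<theta> y
      by (rule has_derivative_eq_rhs,
          rule has_derivative_power[OF has_derivative_ann_residual[OF R_has_derivative[OF r]]])
        (auto simp: fun_eq_iff)
    show "integrable \<mu> (\<lambda>y. (ann_residual \<iota> d H f (R r) \<theta> y)\<^sup>2)" if "\<theta> \<in> ball \<theta>0 1" for \<theta>
    proof (rule finite_measure.integrable_const_bound[OF finite_measure, where B="(F + T + H * (T * A))\<^sup>2"])
      show "AE y in \<mu>. norm ((ann_residual \<iota> d H f (R r) \<theta> y)\<^sup>2) \<le> (F + T + H * (T * A))\<^sup>2"
      proof (rule AE_I2)
        fix y assume "y \<in> space \<mu>"
        then have "\<bar>ann_residual \<iota> d H f (R r) \<theta> y\<bar> \<le> F + T + H * (T * A)"
          by (intro ann_residual_bound[OF T[OF that] Y]) (use A F in auto)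
        from power_mono[OF this abs_ge_zero, of 2]
        show "norm ((ann_residual \<iota> d H f (R r) \<theta> y)\<^sup>2) \<le> (F + T + H * (T * A))\<^sup>2"
          by simp
      qed
    qed (use r in measurable)
    show "\<bar>2 * ann_residual \<iota> d H f (R r) \<theta> y * ann_residual_deriv \<iota> d H (R r) (deriv (R r)) \<theta> y h\<bar>
        \<le> 2 * (F + T + H * (T * A)) * (1 + H * (A + T * A * (1 + d * Y))) * norm h"
      if "y \<in> space \<mu>" "\<theta> \<in> ball \<theta>0 1" for \<theta> y h
      by (rule ann_residual_times_deriv_bound) (use T Y A F that in auto)
  qed (use r in measurable)
qed

lemma tendsto_ann_loss_derivative:
  "(\<lambda>r. \<integral>y. 2 * ann_residual \<iota> d H f (R (Suc r)) \<theta> y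
        * ann_residual_deriv \<iota> d H (R (Suc r)) (deriv (R (Suc r))) \<theta> y h \<partial>\<mu>)
    \<longlonglongrightarrow> (\<integral>y. 2 * ann_residual \<iota> d H f (\<lambda>x. max x 0) \<theta> y
        * ann_residual_deriv \<iota> d H (\<lambda>x. max x 0) (indicator {0<..}) \<theta> y h \<partial>\<mu>)"
proof -
  interpret finite_measure \<mu> by (rule finite_measure)
  obtain F where F: "\<And>y. y \<in> space \<mu> \<Longrightarrow> \<bar>f y\<bar> \<le> F" using f_bounded by blast
  define T where "T = norm \<theta>"
  define Y where "Y = \<bar>a\<bar> + \<bar>b\<bar>"
  obtain A where A: "0 \<le> A" "\<And>r z. r \<ge> 1 \<Longrightarrow> \<bar>z\<bar> \<le> T * (1 + d * Y) \<Longrightarrow> \<bar>R r z\<bar> \<le> A \<and> \<bar>deriv (R r) z\<bar> \<le> A"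
    using R_uniformly_bounded by metis
  have T: "\<And>k. \<bar>\<theta> $ k\<bar> \<le> T"
    unfolding T_def by (rule component_le_norm_cart)
  have Y: "\<And>y j. y \<in> space \<mu> \<Longrightarrow> j \<in> {1..d} \<Longrightarrow> \<bar>y j\<bar> \<le> Y" "0 \<le> Y"
    using input_bound by (auto simp: Y_def)
  have [measurable]: "(\<lambda>x::real. max x 0) \<in> borel_measurable borel" "(indicator {0<..} :: real \<Rightarrow> real) \<in> borel_measurable borel"
    by measurable
  show ?thesis
  proof (rule integral_dominated_convergence[where w="\<lambda>_. 2 * (F + T + H * (T * A)) * (1 + H * (A + T * A * (1 + d * Y))) * norm h"])
    show "AE y in \<mu>. norm (2 * ann_residual \<iota> d H f (R (Suc r)) \<theta> y
        * ann_residual_deriv \<iota> d H (R (Suc r)) (deriv (R (Suc r))) \<theta> y h)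
      \<le> 2 * (F + T + H * (T * A)) * (1 + H * (A + T * A * (1 + d * Y))) * norm h" for r
      by (intro AE_I2, simp only: real_norm_def, rule ann_residual_times_deriv_bound) (use T Y A F in auto)
    show "AE y in \<mu>. (\<lambda>r. 2 * ann_residual \<iota> d H f (R (Suc r)) \<theta> y
        * ann_residual_deriv \<iota> d H (R (Suc r)) (deriv (R (Suc r))) \<theta> y h)
      \<longlonglongrightarrow> 2 * ann_residual \<iota> d H f (\<lambda>x. max x 0) \<theta> y
        * ann_residual_deriv \<iota> d H (\<lambda>x. max x 0) (indicator {0<..}) \<theta> y h"
      unfolding ann_residual_def ann_residual_deriv_def
      by (intro AE_I2 tendsto_intros LIMSEQ_Suc R_tendsto_relu deriv_R_tendsto_step)
  qed measurable
qed

lemma grad_ann_loss_nth: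
  assumes "r \<ge> 1"
  shows "grad (ann_loss \<iota> d H f (R r) \<mu>) \<theta> $ k =
    (\<integral>y. 2 * ann_residual \<iota> d H f (R r) \<theta> y * ann_residual_deriv \<iota> d H (R r) (deriv (R r)) \<theta> y (axis k 1) \<partial>\<mu>)"
  unfolding grad_def frechet_derivative_at[OF has_derivative_ann_loss[OF assms], symmetric] by simp

lemma limit_gradient_orthogonal:
  assumes G_lim: "\<forall>\<theta>. convergent (\<lambda>r. grad (ann_loss \<iota> d H f (R r) \<mu>) \<theta>) \<longrightarrow>
                  (\<lambda>r. grad (ann_loss \<iota> d H f (R r) \<mu>) \<theta>) \<longlonglongrightarrow> G \<theta>"
    and inj: "inj_on \<iota> {1..d * H + 2 * H + 1}" and i: "i \<in> {1..H}"
  shows "(\<Sum>m = 1..d + 2. neuron_sign d m * (G \<theta> $ \<iota> (neuron_index d H i m) * \<theta> $ \<iota> (neuron_index d H i m))) = 0"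
proof -
  define D where "D S S' h = (\<integral>y. 2 * ann_residual \<iota> d H f S \<theta> y * ann_residual_deriv \<iota> d H S S' \<theta> y h \<partial>\<mu>)"
    for S S' h
  define relu :: "real \<Rightarrow> real" where "relu x = max x 0" for x
  let ?grad = "\<lambda>r. grad (ann_loss \<iota> d H f (R r) \<mu>) \<theta>"
  let ?e = "rescaling_direction \<iota> d H \<theta> i"
  let ?\<kappa> = "\<lambda>m. \<iota> (neuron_index d H i m)"
  have D_lim: "(\<lambda>r. D (R (Suc r)) (deriv (R (Suc r))) h) \<longlonglongrightarrow> D relu (indicator {0<..}) h" for h
    unfolding D_def relu_def by (rule tendsto_ann_loss_derivative)
  have grad_D: "?grad (Suc r) $ k = D (R (Suc r)) (deriv (R (Suc r))) (axis k 1)" for r k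
    unfolding D_def by (rule grad_ann_loss_nth) simp
  have "(\<lambda>r. ?grad (Suc r)) \<longlonglongrightarrow> (\<chi> k. D relu (indicator {0<..}) (axis k 1))"
    by (rule vec_tendstoI) (simp only: grad_D vec_lambda_beta D_lim)
  then have "convergent ?grad"
    by (rule convergentI[OF LIMSEQ_imp_Suc])
  then have "?grad \<longlonglongrightarrow> G \<theta>"
    using G_lim by blast
  then have "(\<lambda>r. \<Sum>m = 1..d + 2. neuron_sign d m * (?grad (Suc r) $ ?\<kappa> m * \<theta> $ ?\<kappa> m))
      \<longlonglongrightarrow> (\<Sum>m = 1..d + 2. neuron_sign d m * (G \<theta> $ ?\<kappa> m * \<theta> $ ?\<kappa> m))"
    by (intro tendsto_intros LIMSEQ_Suc)
  moreover have "(\<Sum>m = 1..d + 2. neuron_sign d m * (?grad (Suc r) $ ?\<kappa> m * \<theta> $ ?\<kappa> m))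
      = D (R (Suc r)) (deriv (R (Suc r))) ?e" for r
  proof -
    have lin: "linear (D (R (Suc r)) (deriv (R (Suc r))))"
      unfolding D_def by (rule has_derivative_linear[OF has_derivative_ann_loss]) simp
    show ?thesis
      unfolding rescaling_direction_def linear_sum[OF lin] linear_scale[OF lin] o_def
      by (intro sum.cong refl) (simp add: grad_D)
  qed
  moreover have "D relu (indicator {0<..}) ?e = 0"
    unfolding D_def ann_residual_deriv_rescaling_direction[OF inj i]
    by (simp add: relu_def max_zero_eq_indicator_mult)
  ultimately show ?thesis
    using D_lim[of ?e] LIMSEQ_unique by simp
qed

end

theorem proposition4p4:
  fixes d H :: nat and a b :: real
    and \<iota> :: "nat \<Rightarrow> 'n::finite"
    and f :: "(nat \<Rightarrow> real) \<Rightarrow> real"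
    and R :: "nat \<Rightarrow> real \<Rightarrow> real"
    and \<mu> :: "(nat \<Rightarrow> real) measure"
    and G :: "real^'n \<Rightarrow> real^'n"
    and \<Theta> :: "real \<Rightarrow> real^'n"
  assumes "d \<ge> 1" and "H \<ge> 1" and "a < b"
    and "CARD('n) = d * H + 2 * H + 1"
    and "bij_betw \<iota> {1 .. d * H + 2 * H + 1} (UNIV :: 'n set)"
    and "continuous_on ({1..d} \<rightarrow>\<^sub>E {a..b}) f"
    and R_C1: "\<forall>r\<ge>1. (\<forall>x. R r differentiable at x) \<and> continuous_on UNIV (deriv (R r))"
    and R_lim: "\<forall>x. (\<lambda>r. \<bar>R r x - max x 0\<bar> + \<bar>deriv (R r) x - indicator {0<..} x\<bar>) \<longlonglongrightarrow> 0"
    and R_bd: "\<forall>x. \<exists>C. \<forall>r\<ge>1. \<forall>y\<in>{-\<bar>x\<bar>..\<bar>x\<bar>}. \<bar>deriv (R r) y\<bar> \<le> C"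
    and "finite_measure \<mu>"
    and "sets \<mu> = sets (restrict_space (Pi\<^sub>M {1..d} (\<lambda>_. borel)) ({1..d} \<rightarrow>\<^sub>E {a..b}))"
    and G_lim: "\<forall>\<theta>. convergent (\<lambda>r. grad (ann_loss \<iota> d H f (R r) \<mu>) \<theta>) \<longrightarrow>
                  (\<lambda>r. grad (ann_loss \<iota> d H f (R r) \<mu>) \<theta>) \<longlonglongrightarrow> G \<theta>"
    and G_meas: "G \<in> borel_measurable borel"
    and G_locbd: "\<forall>K. compact K \<longrightarrow> bounded (G ` K)"
    and "continuous_on {0..} \<Theta>"
    and "\<forall>t\<ge>0. \<Theta> t = \<Theta> 0 - (LINT s:{0..t}|lborel. G (\<Theta> s))"
  shows "(\<forall>t\<ge>0. \<forall>i\<in>{1..H}. Wfun \<iota> d H i (\<Theta> t) = Wfun \<iota> d H i (\<Theta> 0)) \<and>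
         (\<forall>t\<ge>0. (\<Sum>i = 1..H. Wfun \<iota> d H i (\<Theta> t)) = (\<Sum>i = 1..H. Wfun \<iota> d H i (\<Theta> 0)))"
proof -
  interpret smoothed_relu_regression d a b f R \<mu>
    using assms(6-11) by (rule smoothed_relu_regression.intro)
  have inj: "inj_on \<iota> {1..d * H + 2 * H + 1}"
    using assms(5) by (rule bij_betw_imp_inj_on)
  have conserved: "Wfun \<iota> d H i (\<Theta> t) = Wfun \<iota> d H i (\<Theta> 0)" if "0 \<le> t" "i \<in> {1..H}" for t i
  proof -
    have cont: "continuous_on {0..t} \<Theta>"
      using assms(15) by (rule continuous_on_subset) auto
    have bounded: "bounded (G ` \<Theta> ` {0..t})"
      using G_locbd compact_continuous_image[OF cont] by blast
    have flow: "\<Theta> s = \<Theta> 0 - (LINT u:{0..s}|lborel. G (\<Theta> u))" if "s \<in> {0..t}" for s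
      using that by (intro assms(16)[rule_format]) simp
    show ?thesis
      unfolding Wfun_eq_sum
      by (rule flow_conserves_quadratic_form[OF G_meas bounded cont flow \<open>0 \<le> t\<close>
            limit_gradient_orthogonal[OF G_lim inj \<open>i \<in> {1..H}\<close>]])
  qed
  then show ?thesis
    by (blast intro: sum.cong)
qed

end
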